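(* In the setting described in the context, under the non-atomic assumption, for any player $i$, any contention windows $W_{-i}$ of the other players, and any $W_i<W_i'$, one has $\widehat S_i(W_i,W_{-i})>\widehat S_i(W_i',W_{-i})$; that is, given any strategies of the others, player $i$ obtains a strictly higher utility by decreasing its contention window.
   Context: Model: users $\mathcal N=\{1,\dots,n\}$, fixed integer $m\ge1$. User $i$ chooses a contention window (CW) $W_i\in\{0,1,2,\dots\}$ and a data rate $R_i\in[R_{min,i},R_{max,i}]$; $e_i$ is its packet error rate function (values in $[0,1]$, increasing in the rate), $G_i(R)=(1-e_i(R))R$. For $x\in[0,1]$, $\Gamma_i(x)=\frac{2}{W_i+1+xW_i\sum_{l=0}^{m-1}(2x)^l}$. Given $(W_j,R_j)_j$, the stationary state $(\tau_j,p_j,q_j)_j$ (assumed unique) solves $q_j=1-(1-p_j)(1-e_j(R_j))$, $\tau_j=\Gamma_j(q_j)$, $p_j=1-\prod_{k\ne j}(1-\tau_k)$; $\rho_j=1-\tau_j$. Utility: $S_i=\frac{(1-\rho_i)\prod_{j\ne i}\rho_j\,G_i(R_i)}{1-\prod_{j}\rho_j}$. For a CW profile $\mathbf W$, $\mathbf R^*(\mathbf W)$ denotes the unique Nash equilibrium of the rate adaptation game in which each player $i$ chooses $R_i\in[R_{min,i},R_{max,i}]$ to maximize $S_i$ with $\mathbf W$ fixed; and $\widehat S_i(\mathbf W)=S_i(\mathbf W,\mathbf R^*(\mathbf W))$ is the utility of player $i$ in the medium access game $G_M$. Non-atomic assumption: the number of users is large, so changing user $i$'s CW and rate leaves the states $(q_j,\tau_j,R_j)$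 of the other users $j\ne i$ unchanged; and $\prod_{j\in\mathcal N}\rho_j\simeq\prod_{j\ne i}\rho_j$. *)

theory Defs
  imports Complex_Main
begin

definition Gamma :: "nat \<Rightarrow> nat \<Rightarrow> real \<Rightarrow> real" where
  "Gamma m W x = 2 / (real W + 1 + x * real W * (\<Sum>l<m. (2 * x) ^ l))"

definition goodput :: "(real \<Rightarrow> real) \<Rightarrow> real \<Rightarrow> real" where
  "goodput e R = (1 - e R) * R"

text \<open>Non-atomic setting, viewpoint of player i: the stationary attempt
  probabilities tau_j of the other players j in N - {i} are fixed (they do not
  react to player i's choice of CW and rate).\<close>
definition others_prod :: "'a set \<Rightarrow> 'a \<Rightarrow> ('a \<Rightarrow> real) \<Rightarrow> real" where
  "others_prod N i tau = (\<Prod>j\<in>N - {i}. (1 - tau j))"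

definition coll_prob :: "'a set \<Rightarrow> 'a \<Rightarrow> ('a \<Rightarrow> real) \<Rightarrow> real" where
  "coll_prob N i tau = 1 - others_prod N i tau"

definition own_q :: "'a set \<Rightarrow> 'a \<Rightarrow> ('a \<Rightarrow> real) \<Rightarrow> (real \<Rightarrow> real) \<Rightarrow> real \<Rightarrow> real" where
  "own_q N i tau e R = 1 - (1 - coll_prob N i tau) * (1 - e R)"

definition own_tau :: "nat \<Rightarrow> 'a set \<Rightarrow> 'a \<Rightarrow> ('a \<Rightarrow> real) \<Rightarrow> (real \<Rightarrow> real) \<Rightarrow> nat \<Rightarrow> real \<Rightarrow> real" where
  "own_tau m N i tau e W R = Gamma m W (own_q N i tau e R)"

definition utility :: "nat \<Rightarrow> 'a set \<Rightarrow> 'a \<Rightarrow> ('a \<Rightarrow> real) \<Rightarrow> (real \<Rightarrow> real) \<Rightarrow> nat \<Rightarrow> real \<Rightarrow> real" where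
  "utility m N i tau e W R =
     (let ti = own_tau m N i tau e W R;
          P = others_prod N i tau
      in (1 - (1 - ti)) * P * goodput e R / (1 - (1 - ti) * P))"

text \<open>R is player i's equilibrium rate for CW W: with the others fixed (non-atomic
  assumption), the i-th component of the rate-game Nash equilibrium maximizes S_i
  over [Rmin, Rmax].  Hence hat S_i(W) = utility ... W R for such R.\<close>
definition best_rate :: "nat \<Rightarrow> 'a set \<Rightarrow> 'a \<Rightarrow> ('a \<Rightarrow> real) \<Rightarrow> (real \<Rightarrow> real) \<Rightarrow> real \<Rightarrow> real \<Rightarrow> nat \<Rightarrow> real \<Rightarrow> bool" where
  "best_rate m N i tau e Rmin Rmax W R \<longleftrightarrow>
     R \<in> {Rmin..Rmax} \<and>
     (\<forall>R'\<in>{Rmin..Rmax}. utility m N i tau e W R' \<le> utility m N i tau e W R)"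

end

theory Submission
  imports Defs
begin

text \<open>For fixed others, player i's utility has the form
  \<open>\<tau> P G / (1 - (1 - \<tau>) P)\<close>, which is strictly increasing in its own attempt
  probability \<open>\<tau>\<close> as long as \<open>0 < P < 1\<close> and \<open>G > 0\<close>, while \<open>\<tau> = \<Gamma>(q)\<close> is strictly
  decreasing in the contention window for every fixed rate.  Hence with the rate
  \<open>R\<^sub>2\<close> optimal for \<open>W\<^sub>2\<close> held fixed, the smaller window \<open>W\<^sub>1\<close> already does strictly
  better, and the optimal rate for \<open>W\<^sub>1\<close> does at least as well.  If the goodput at
  \<open>R\<^sub>2\<close> vanishes, the utility at \<open>W\<^sub>2\<close> is zero while some rate of positive goodput
  gives a positive utility at \<open>W\<^sub>1\<close>.\<close>

lemma Gamma_pos: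
  assumes "0 \<le> q"
  shows "0 < Gamma m W q"
proof -
  have "0 \<le> q * real W * (\<Sum>l<m. (2 * q) ^ l)"
    using assms by (simp add: sum_nonneg)
  then show ?thesis
    unfolding Gamma_def by simp
qed

lemma Gamma_strict_antimono:
  assumes "0 \<le> q" and "W1 < W2"
  shows "Gamma m W2 q < Gamma m W1 q"
proof -
  define s where "s = (\<Sum>l<m. (2 * q) ^ l)"
  have "0 \<le> q * s"
    unfolding s_def using assms(1) by (simp add: sum_nonneg)
  then have "q * s * real W1 \<le> q * s * real W2"
    using assms(2) by (intro mult_left_mono) auto
  then have "real W1 + 1 + q * real W1 * s < real W2 + 1 + q * real W2 * s"
    using assms(2) by (simp add: algebra_simps)
  moreover have "0 < real W1 + 1 + q * real W1 * s"
    using mult_nonneg_nonneg[OF \<open>0 \<le> q * s\<close> of_nat_0_le_iff[of W1]]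
    by (simp add: mult.commute mult.left_commute)
  ultimately show ?thesis
    unfolding Gamma_def s_def[symmetric] by (intro divide_strict_left_mono) auto
qed

lemma access_denominator_pos:
  fixes P t :: real
  assumes "P < 1" and "0 \<le> t" and "0 \<le> P"
  shows "0 < 1 - (1 - t) * P"
proof -
  have "1 - (1 - t) * P = (1 - P) + t * P"
    by (simp add: algebra_simps)
  moreover have "0 \<le> t * P"
    using assms by simp
  ultimately show ?thesis
    using assms(1) by linarith
qed

lemma access_ratio_strict_mono:
  fixes P t1 t2 G :: real
  assumes "0 < P" and "P < 1" and "0 \<le> t2" and "t2 < t1" and "0 < G"
  shows "t2 * P * G / (1 - (1 - t2) * P) < t1 * P * G / (1 - (1 - t1) * P)"
proof -
  have d1: "0 < 1 - (1 - t1) * P" and d2: "0 < 1 - (1 - t2) * P"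
    using assms access_denominator_pos[of P t1] access_denominator_pos[of P t2] by auto
  have "t1 * (1 - (1 - t2) * P) - t2 * (1 - (1 - t1) * P) = (t1 - t2) * (1 - P)"
    by (simp add: algebra_simps)
  also have "\<dots> > 0"
    using assms by simp
  finally have "t2 * (1 - (1 - t1) * P) * (P * G) < t1 * (1 - (1 - t2) * P) * (P * G)"
    using assms by (intro mult_strict_right_mono) auto
  with d1 d2 show ?thesis
    by (simp add: divide_simps algebra_simps)
qed

lemma access_ratio_pos:
  fixes P t G :: real
  assumes "0 < P" and "P < 1" and "0 < t" and "0 < G"
  shows "0 < t * P * G / (1 - (1 - t) * P)"
  using assms access_denominator_pos[of P t] by simp

lemma others_prod_pos:
  assumes "\<forall>j\<in>N - {i}. 0 < tau j \<and> tau j < 1"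
  shows "0 < others_prod N i tau"
  unfolding others_prod_def using assms by (intro prod_pos) auto

lemma others_prod_less_1:
  assumes "finite N" and "N - {i} \<noteq> {}"
    and "\<forall>j\<in>N - {i}. 0 < tau j \<and> tau j < 1"
  shows "others_prod N i tau < 1"
proof -
  obtain j where j: "j \<in> N - {i}"
    using assms(2) by blast
  define Q where "Q = (\<Prod>k\<in>N - {i} - {j}. 1 - tau k)"
  have "others_prod N i tau = (1 - tau j) * Q"
    unfolding others_prod_def Q_def using j assms(1) by (simp add: prod.remove)
  moreover have "0 \<le> Q" and "Q \<le> 1"
    unfolding Q_def using assms(3) by (force intro: prod_nonneg prod_le_1)+
  moreover have "0 < tau j" and "tau j < 1"
    using assms(3) j by auto
  ultimately have "others_prod N i tau \<le> 1 - tau j"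
    by (simp add: mult_left_le)
  with \<open>0 < tau j\<close> show ?thesis
    by linarith
qed

lemma own_q_nonneg:
  assumes "0 \<le> others_prod N i tau" and "others_prod N i tau \<le> 1"
    and "0 \<le> e R" and "e R \<le> 1"
  shows "0 \<le> own_q N i tau e R"
proof -
  have "others_prod N i tau * (1 - e R) \<le> 1"
    using assms by (intro mult_le_one) auto
  then show ?thesis
    unfolding own_q_def coll_prob_def by simp
qed

lemma utility_eq_access_ratio:
  "utility m N i tau e W R =
     own_tau m N i tau e W R * others_prod N i tau * goodput e R /
     (1 - (1 - own_tau m N i tau e W R) * others_prod N i tau)"
  unfolding utility_def Let_def by simp

lemma utility_strict_antimono_window:
  assumes "0 < others_prod N i tau" and "others_prod N i tau < 1"
    and "0 \<le> e R" and "e R \<le> 1" and "0 < goodput e R" and "W1 < W2"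
  shows "utility m N i tau e W2 R < utility m N i tau e W1 R"
proof -
  have q: "0 \<le> own_q N i tau e R"
    using assms by (intro own_q_nonneg) auto
  have "0 \<le> own_tau m N i tau e W2 R"
    unfolding own_tau_def using Gamma_pos[OF q] by (simp add: less_imp_le)
  moreover have "own_tau m N i tau e W2 R < own_tau m N i tau e W1 R"
    unfolding own_tau_def using Gamma_strict_antimono[OF q assms(6)] .
  ultimately show ?thesis
    unfolding utility_eq_access_ratio using access_ratio_strict_mono assms(1,2,5) by blast
qed

lemma utility_pos:
  assumes "0 < others_prod N i tau" and "others_prod N i tau < 1"
    and "0 \<le> e R" and "e R \<le> 1" and "0 < goodput e R"
  shows "0 < utility m N i tau e W R"
proof -
  have "0 \<le> own_q N i tau e R"
    using assms by (intro own_q_nonneg) auto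
  then have "0 < own_tau m N i tau e W R"
    unfolding own_tau_def by (rule Gamma_pos)
  then show ?thesis
    unfolding utility_eq_access_ratio using assms(1,2,5) by (intro access_ratio_pos)
qed

theorem lemma5:
  fixes N :: "'a set" and i :: 'a and tau :: "'a \<Rightarrow> real"
    and e :: "real \<Rightarrow> real" and Rmin Rmax :: real and m W1 W2 :: nat
    and R1 R2 :: real
  assumes "finite N" and "i \<in> N" and "N - {i} \<noteq> {}"
    and "\<forall>j\<in>N - {i}. 0 < tau j \<and> tau j < 1"
    and "m \<ge> 1"
    and "0 < Rmin" and "Rmin \<le> Rmax"
    and "\<forall>R\<in>{Rmin..Rmax}. 0 \<le> e R \<and> e R \<le> 1"
    and "mono_on {Rmin..Rmax} e"
    and "\<exists>R\<in>{Rmin..Rmax}. e R < 1"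
    and "W1 < W2"
    and "best_rate m N i tau e Rmin Rmax W1 R1"
    and "best_rate m N i tau e Rmin Rmax W2 R2"
  shows "utility m N i tau e W1 R1 > utility m N i tau e W2 R2"
proof -
  have P: "0 < others_prod N i tau" "others_prod N i tau < 1"
    using assms(1,3,4) by (auto intro: others_prod_pos others_prod_less_1)
  have R2: "R2 \<in> {Rmin..Rmax}"
    and opt1: "\<forall>R\<in>{Rmin..Rmax}. utility m N i tau e W1 R \<le> utility m N i tau e W1 R1"
    using assms(12,13) unfolding best_rate_def by auto
  show ?thesis
  proof (cases "0 < goodput e R2")
    case True
    then have "utility m N i tau e W2 R2 < utility m N i tau e W1 R2"
      using P R2 assms(8,11) by (intro utility_strict_antimono_window) auto
    also have "\<dots> \<le> utility m N i tau e W1 R1"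
      using opt1 R2 by blast
    finally show ?thesis .
  next
    case False
    moreover have "0 \<le> e R2" "e R2 \<le> 1"
      using R2 assms(8) by auto
    ultimately have "goodput e R2 = 0"
      using R2 assms(6) unfolding goodput_def by (auto simp: zero_less_mult_iff)
    then have "utility m N i tau e W2 R2 = 0"
      unfolding utility_eq_access_ratio by simp
    moreover obtain R where R: "R \<in> {Rmin..Rmax}" "e R < 1"
      using assms(10) by blast
    then have "0 < utility m N i tau e W1 R"
      using P assms(6,8) by (intro utility_pos) (auto simp: goodput_def)
    ultimately show ?thesis
      using opt1 R(1) by fastforce
  qed
qed

end
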